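(* Let $G$ be a finite group and $N\trianglelefteq G$ a normal subgroup. Then: (1) $\operatorname{Ind}_N^G:\operatorname{R}(N)\to\operatorname{R}(G)$ is a monomorphism if and only if $(n)_G=(n)_N$ for every $n\in N$. (2) $\operatorname{Ind}_N^G:\operatorname{RO}(N)\to\operatorname{RO}(G)$ is a monomorphism if and only if $(n)_G^{\pm}=(n)_N^{\pm}$ for every $n\in N$.
   Context: $\operatorname{R}(K)$, $\operatorname{RO}(K)$ are the complex and real representation groups of $K$ (Grothendieck groups of $\mathbb{C}K$-, resp. $\mathbb{R}K$-modules). $(n)_K$ is the conjugacy class of $n$ in $K$, and $(n)_K^{\pm}=(n)_K\cup(n^{-1})_K$ its real conjugacy class in $K$. *)

theory Defs
  imports "HOL-Algebra.Algebra" "Jordan_Normal_Form.Matrix"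
begin

definition mat_tr :: "'a::comm_ring_1 mat \<Rightarrow> 'a" where
  "mat_tr A = (\<Sum>i<dim_row A. A $$ (i, i))"

definition is_rep :: "('g, 'b) monoid_scheme \<Rightarrow> nat \<Rightarrow> ('g \<Rightarrow> 'a::field mat) \<Rightarrow> bool" where
  "is_rep K d \<rho> \<longleftrightarrow>
     (\<forall>x\<in>carrier K. \<rho> x \<in> carrier_mat d d) \<and>
     \<rho> \<one>\<^bsub>K\<^esub> = 1\<^sub>m d \<and>
     (\<forall>x\<in>carrier K. \<forall>y\<in>carrier K. \<rho> (x \<otimes>\<^bsub>K\<^esub> y) = \<rho> x * \<rho> y)"

definition complex_characters :: "('g, 'b) monoid_scheme \<Rightarrow> ('g \<Rightarrow> complex) set" where
  "complex_characters K = {\<chi>. \<exists>d \<rho>. is_rep K d (\<rho> :: 'g \<Rightarrow> complex mat) \<and>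
      \<chi> = (\<lambda>x. if x \<in> carrier K then mat_tr (\<rho> x) else 0)}"

definition real_characters :: "('g, 'b) monoid_scheme \<Rightarrow> ('g \<Rightarrow> complex) set" where
  "real_characters K = {\<chi>. \<exists>d \<rho>. is_rep K d (\<rho> :: 'g \<Rightarrow> real mat) \<and>
      \<chi> = (\<lambda>x. if x \<in> carrier K then complex_of_real (mat_tr (\<rho> x)) else 0)}"

(* The representation groups, realised (via the character map, which embeds the
   Grothendieck group into class functions) as the groups of virtual characters
   [V] - [W]. *)
definition R :: "('g, 'b) monoid_scheme \<Rightarrow> ('g \<Rightarrow> complex) set" where
  "R K = {\<lambda>x. \<chi> x - \<psi> x | \<chi> \<psi>. \<chi> \<in> complex_characters K \<and> \<psi> \<in> complex_characters K}"

definition RO :: "('g, 'b) monoid_scheme \<Rightarrow> ('g \<Rightarrow> complex) set" where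
  "RO K = {\<lambda>x. \<chi> x - \<psi> x | \<chi> \<psi>. \<chi> \<in> real_characters K \<and> \<psi> \<in> real_characters K}"

definition Ind :: "('g, 'b) monoid_scheme \<Rightarrow> 'g set \<Rightarrow> ('g \<Rightarrow> complex) \<Rightarrow> ('g \<Rightarrow> complex)" where
  "Ind G N f = (\<lambda>g. if g \<in> carrier G then
      (1 / of_nat (card N)) * (\<Sum>x\<in>carrier G.
         if x \<otimes>\<^bsub>G\<^esub> g \<otimes>\<^bsub>G\<^esub> inv\<^bsub>G\<^esub> x \<in> N
         then f (x \<otimes>\<^bsub>G\<^esub> g \<otimes>\<^bsub>G\<^esub> inv\<^bsub>G\<^esub> x) else 0)
      else 0)"

definition conj_class :: "('g, 'b) monoid_scheme \<Rightarrow> 'g set \<Rightarrow> 'g \<Rightarrow> 'g set" where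
  "conj_class G K n = {k \<otimes>\<^bsub>G\<^esub> n \<otimes>\<^bsub>G\<^esub> inv\<^bsub>G\<^esub> k | k. k \<in> K}"

definition real_conj_class :: "('g, 'b) monoid_scheme \<Rightarrow> 'g set \<Rightarrow> 'g \<Rightarrow> 'g set" where
  "real_conj_class G K n = conj_class G K n \<union> conj_class G K (inv\<^bsub>G\<^esub> n)"

end

theory Submission
  imports Defs "Jordan_Normal_Form.Schur_Decomposition"
begin

text \<open>
  Induction from a normal subgroup \<open>N\<close> does not see \<open>G\<close>-conjugation:
  \<open>Ind (f\<^sup>g) = Ind f\<close>, while on \<open>G\<close>-invariant class functions it is
  multiplication by \<open>|G|/|N|\<close>. Hence \<open>Ind\<close> is injective on \<open>R(N)\<close>
  (resp. \<open>RO(N)\<close>) iff every virtual character of \<open>N\<close> is \<open>G\<close>-invariant.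
  This holds iff the \<open>G\<close>-classes meeting \<open>N\<close> are \<open>N\<close>-classes (resp. real classes),
  because characters separate conjugacy classes: inducing the linear characters of
  the cyclic group \<open>\<langle>n\<rangle>\<close> and summing against the roots of unity counts the
  coset representatives conjugating \<open>x\<close> to \<open>n\<close>. Real characters are obtained by
  realifying these induced representations; they are inverse-invariant, since a complex
  matrix \<open>A\<close> of finite order has \<open>tr (A\<^sup>-\<^sup>1) = cnj (tr A)\<close> (triangularise it).
\<close>

section \<open>Traces of matrices of finite order\<close>

lemma mat_tr_mult_comm:
  assumes "A \<in> carrier_mat n m" and "B \<in> carrier_mat m n"
  shows "mat_tr (A * B) = mat_tr (B * A)"
proof -
  have "mat_tr (A * B) = (\<Sum>i<n. \<Sum>j<m. A $$ (i,j) * B $$ (j,i))"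
    using assms by (simp add: mat_tr_def scalar_prod_def atLeast0LessThan)
  also have "\<dots> = (\<Sum>j<m. \<Sum>i<n. B $$ (j,i) * A $$ (i,j))"
    by (subst sum.swap) (simp add: mult.commute)
  also have "\<dots> = mat_tr (B * A)"
    using assms by (simp add: mat_tr_def scalar_prod_def atLeast0LessThan)
  finally show ?thesis .
qed

lemma mat_tr_one_mat: "mat_tr (1\<^sub>m n :: 'a::comm_ring_1 mat) = of_nat n"
  by (simp add: mat_tr_def)

lemma mat_tr_similar_mat_wit:
  assumes "similar_mat_wit A B P Q"
  shows "mat_tr A = mat_tr B"
proof -
  note wit = similar_mat_witD[OF refl assms]
  have "mat_tr A = mat_tr (P * (B * Q))"
    by (simp add: wit(3) assoc_mult_mat[OF wit(6,5,7)])
  also have "\<dots> = mat_tr (B * Q * P)"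
    by (rule mat_tr_mult_comm[OF wit(6) mult_carrier_mat[OF wit(5,7)]])
  also have "\<dots> = mat_tr B"
    by (simp add: assoc_mult_mat[OF wit(5,7,6)] wit(2) right_mult_one_mat[OF wit(5)])
  finally show ?thesis .
qed

lemma upper_triangular_mult:
  assumes A: "A \<in> carrier_mat n n" and B: "B \<in> carrier_mat n n"
    and "upper_triangular A" and "upper_triangular B"
  shows "upper_triangular (A * B)"
proof
  fix i j assume ji: "j < i" and "i < dim_row (A * B)"
  then have i: "i < n" using A by simp
  have "A $$ (i,k) * B $$ (k,j) = 0" if "k < n" for k
  proof (cases "k < i")
    case True
    then show ?thesis using assms(3) A i by (simp add: upper_triangularD)
  next
    case False
    then show ?thesis using assms(4) B ji that by (simp add: upper_triangularD)
  qed
  then show "(A * B) $$ (i, j) = 0"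
    using A B i ji by (simp add: scalar_prod_def)
qed

lemma diag_upper_triangular_mult:
  assumes A: "A \<in> carrier_mat n n" and B: "B \<in> carrier_mat n n"
    and "upper_triangular A" and "upper_triangular B" and i: "i < n"
  shows "(A * B) $$ (i,i) = A $$ (i,i) * B $$ (i,i)"
proof -
  have off_diag: "A $$ (i,k) * B $$ (k,i) = 0" if "k < n" "k \<noteq> i" for k
  proof (cases "k < i")
    case True
    then show ?thesis using assms(3) A i by (simp add: upper_triangularD)
  next
    case False
    then show ?thesis using assms(4) B that by (simp add: upper_triangularD)
  qed
  have "(A * B) $$ (i,i) = (\<Sum>k\<in>{0..<n}. A $$ (i,k) * B $$ (k,i))"
    using A B i by (simp add: scalar_prod_def)
  also have "\<dots> = A $$ (i,i) * B $$ (i,i)"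
    using i off_diag by (subst sum.remove[of _ i]) (auto intro!: sum.neutral)
  finally show ?thesis .
qed

lemma upper_triangular_pow:
  assumes B: "B \<in> carrier_mat n n" and "upper_triangular B"
  shows "upper_triangular (B ^\<^sub>m k) \<and> (\<forall>i<n. (B ^\<^sub>m k) $$ (i,i) = B $$ (i,i) ^ k)"
proof (induct k)
  case (Suc k)
  have Bk: "B ^\<^sub>m k \<in> carrier_mat n n" and ut: "upper_triangular (B ^\<^sub>m k)"
    using B Suc by auto
  have "(B ^\<^sub>m k * B) $$ (i,i) = B $$ (i,i) ^ Suc k" if "i < n" for i
  proof -
    have "(B ^\<^sub>m k * B) $$ (i,i) = (B ^\<^sub>m k) $$ (i,i) * B $$ (i,i)"
      by (rule diag_upper_triangular_mult[OF Bk B ut assms(2) that])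
    then show ?thesis
      using Suc that by (simp add: power_commutes)
  qed
  then show ?case
    using upper_triangular_mult[OF Bk B ut assms(2)] by simp
qed (use B in auto)

lemma root_of_unity_pow_pred:
  fixes z :: complex
  assumes "z ^ m = 1" and "0 < m"
  shows "z ^ (m - 1) = cnj z"
proof -
  have "norm z ^ m = 1" using assms(1) by (metis norm_one norm_power)
  then have "norm z = 1"
    using assms(2) power_eq_imp_eq_base[of "norm z" m 1] by simp
  then have cnj_z: "z * cnj z = 1"
    by (simp flip: complex_norm_square)
  have pow_z: "z * z ^ (m - 1) = 1"
    using assms(1) power_Suc[of z "m - 1"] Suc_pred[OF assms(2)] by simp
  have "z ^ (m - 1) = z ^ (m - 1) * (z * cnj z)"
    by (simp add: cnj_z)
  also have "\<dots> = (z * z ^ (m - 1)) * cnj z"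
    by (simp only: mult_ac)
  also have "\<dots> = cnj z"
    by (simp only: pow_z mult_1_left)
  finally show ?thesis .
qed

text \<open>Triangularise \<open>A\<close>: the diagonal entries are roots of unity \<open>z\<close>, and \<open>z ^ (m - 1) = cnj z\<close>.\<close>

lemma mat_tr_pow_pred_finite_order:
  fixes A :: "complex mat"
  assumes A: "A \<in> carrier_mat d d" and order: "A ^\<^sub>m m = 1\<^sub>m d" and m: "0 < m"
  shows "mat_tr (A ^\<^sub>m (m - 1)) = cnj (mat_tr A)"
proof -
  obtain es where "char_poly A = (\<Prod>a\<leftarrow>es. [:- a, 1:])"
    using char_poly_factorized[OF A] by blast
  then obtain B P Q where B: "B \<in> carrier_mat d d" "upper_triangular B"
    and sim: "similar_mat_wit A B P Q"
    using schur_decomposition_exists[OF A] unfolding similar_mat_def by blast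
  have tr_pow: "mat_tr (A ^\<^sub>m k) = mat_tr (B ^\<^sub>m k)" for k
    using mat_tr_similar_mat_wit[OF similar_mat_wit_pow[OF sim]] .
  note wit = similar_mat_witD2[OF A sim]
  have "B ^\<^sub>m m = Q * A ^\<^sub>m m * P"
    using similar_mat_wit_pow_id[OF similar_mat_wit_sym[OF sim]] .
  also have "\<dots> = 1\<^sub>m d"
    by (simp add: order wit(2) right_mult_one_mat[OF wit(7)])
  finally have "(B $$ (i,i)) ^ m = 1" if "i < d" for i
    using upper_triangular_pow[OF B, of m] that by simp
  then have "(B ^\<^sub>m (m - 1)) $$ (i,i) = cnj (B $$ (i,i))" if "i < d" for i
    using upper_triangular_pow[OF B, of "m - 1"] root_of_unity_pow_pred[OF _ m] that by simp
  then have "mat_tr (B ^\<^sub>m (m - 1)) = cnj (mat_tr B)"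
    using B by (simp add: mat_tr_def cnj_sum)
  then show ?thesis
    using tr_pow[of "m - 1"] tr_pow[of 1] A B by simp
qed

lemma mat_tr_pow_pred_finite_order_real:
  fixes A :: "real mat"
  assumes A: "A \<in> carrier_mat d d" and "A ^\<^sub>m m = 1\<^sub>m d" and "0 < m"
  shows "mat_tr (A ^\<^sub>m (m - 1)) = mat_tr A"
proof -
  let ?C = "map_mat complex_of_real"
  have tr: "mat_tr (?C M) = complex_of_real (mat_tr M)" if "M \<in> carrier_mat d d" for M
    using that by (simp add: mat_tr_def)
  have pow: "?C A ^\<^sub>m k = ?C (A ^\<^sub>m k)" for k
    by (rule of_real_hom.mat_hom_pow[OF A, symmetric])
  have "?C A ^\<^sub>m m = 1\<^sub>m d"
    using assms pow by (simp add: of_real_hom.mat_hom_one)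
  then have "mat_tr (?C A ^\<^sub>m (m - 1)) = cnj (mat_tr (?C A))"
    using mat_tr_pow_pred_finite_order[of "?C A"] A assms(3) by simp
  then show ?thesis
    using A by (simp add: pow tr)
qed

section \<open>Roots of unity and realification\<close>

definition unit_root :: "nat \<Rightarrow> complex" where
  "unit_root m = cis (2 * pi / real m)"

lemma unit_root_pow: "unit_root m ^ k = cis (2 * pi * real k / real m)"
  unfolding unit_root_def DeMoivre by (simp add: field_simps)

lemma norm_unit_root_pow [simp]: "norm (unit_root m ^ k) = 1"
  by (simp add: unit_root_pow)

lemma unit_root_pow_eq_1_iff:
  assumes m: "0 < m"
  shows "unit_root m ^ k = 1 \<longleftrightarrow> m dvd k"
proof
  assume "unit_root m ^ k = 1"
  then have "cos (2 * pi * real k / real m) = 1"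
    unfolding unit_root_pow by (metis Re_complex_of_real cis.sel(1) one_complex.sel(1))
  then obtain z :: int where "2 * pi * real k / real m = real_of_int z * 2 * pi"
    using cos_one_2pi_int by blast
  then have "real k = real_of_int z * real m"
    using m by (simp add: field_simps)
  then have "int k = z * int m"
    by (metis of_int_eq_iff of_int_mult of_int_of_nat_eq)
  then show "m dvd k"
    by (metis dvd_triv_right int_dvd_int_iff)
next
  assume "m dvd k"
  then obtain q where "k = m * q" ..
  then have "2 * pi * real k / real m = 2 * pi * real q"
    using m by simp
  then show "unit_root m ^ k = 1"
    unfolding unit_root_pow by simp
qed

lemma sum_unit_root_pow:
  assumes m: "0 < m"
  shows "(\<Sum>k<m. (unit_root m ^ j) ^ k) = (if m dvd j then of_nat m else 0)"
proof (cases "m dvd j")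
  case True
  then show ?thesis
    using unit_root_pow_eq_1_iff[OF m, of j] by simp
next
  case False
  have "(unit_root m ^ j) ^ m = 1"
    using unit_root_pow_eq_1_iff[OF m, of "j * m"] by (simp add: power_mult)
  then show ?thesis
    using False unit_root_pow_eq_1_iff[OF m] by (simp add: sum_gp_strict)
qed

lemma inverse_eq_cnj_if_norm_1:
  fixes z :: complex
  assumes "norm z = 1"
  shows "inverse z = cnj z"
proof (rule inverse_unique)
  show "z * cnj z = 1"
    using assms by (simp flip: complex_norm_square)
qed

lemma sum_lessThan_double: "(\<Sum>l<2*d. f l) = (\<Sum>p<d. f (2*p) + f (2*p+1::nat))"
  by (induct d) (simp_all add: add.assoc)

lemma sum_if_const_lessThan:
  "(\<Sum>i<(d::nat). if P i then c else 0) = of_nat (card {i. i < d \<and> P i}) * c"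
proof -
  have "(\<Sum>i<d. if P i then c else 0) = (\<Sum>i\<in>{i\<in>{..<d}. P i}. c)"
    by (rule sum.inter_filter[symmetric]) simp
  then show ?thesis
    by simp
qed

text \<open>The real matrix \<open>[[Re a, - Im a], [Im a, Re a]]\<close> of multiplication by \<open>a\<close> on \<open>\<complex> = \<real>\<^sup>2\<close>;
  \<open>realify\<close> replaces every entry of a complex matrix by this block.\<close>

definition complex_block :: "complex \<Rightarrow> nat \<Rightarrow> nat \<Rightarrow> real" where
  "complex_block a s t =
     (if s = 0 then (if t = 0 then Re a else - Im a) else (if t = 0 then Im a else Re a))"

definition realify :: "complex mat \<Rightarrow> real mat" where
  "realify A = mat (2 * dim_row A) (2 * dim_col A)
     (\<lambda>(i,j). complex_block (A $$ (i div 2, j div 2)) (i mod 2) (j mod 2))"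

lemma dim_row_realify [simp]: "dim_row (realify A) = 2 * dim_row A"
  by (simp add: realify_def)

lemma dim_col_realify [simp]: "dim_col (realify A) = 2 * dim_col A"
  by (simp add: realify_def)

lemma realify_carrier_mat [simp]: "A \<in> carrier_mat n m \<Longrightarrow> realify A \<in> carrier_mat (2*n) (2*m)"
  by (rule carrier_matI) simp_all

lemma index_realify:
  "i < 2 * dim_row A \<Longrightarrow> j < 2 * dim_col A \<Longrightarrow>
   realify A $$ (i,j) = complex_block (A $$ (i div 2, j div 2)) (i mod 2) (j mod 2)"
  by (simp add: realify_def)

lemma complex_block_mult:
  "s < 2 \<Longrightarrow> t < 2 \<Longrightarrow>
   complex_block a s 0 * complex_block b 0 t + complex_block a s 1 * complex_block b 1 t
   = complex_block (a * b) s t"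
  unfolding complex_block_def by (cases "s = 0"; cases "t = 0") (auto simp: algebra_simps)

lemma complex_block_sum: "complex_block (sum f S) s t = (\<Sum>x\<in>S. complex_block (f x) s t)"
  unfolding complex_block_def by (simp add: Re_sum Im_sum sum_negf)

lemma complex_block_one_zero:
  "s < 2 \<Longrightarrow> t < 2 \<Longrightarrow>
   complex_block (if p = q then 1 else 0) s t = (if p = q \<and> s = t then 1 else 0)"
  by (auto simp: complex_block_def less_2_cases_iff)

lemma realify_one: "realify (1\<^sub>m d) = 1\<^sub>m (2*d)"
proof (rule eq_matI)
  fix i j assume "i < dim_row (1\<^sub>m (2*d))" "j < dim_col (1\<^sub>m (2 * d))"
  then have i: "i < 2*d" and j: "j < 2*d" by auto
  have "i = j \<longleftrightarrow> i div 2 = j div 2 \<and> i mod 2 = j mod 2"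
    by (metis div_mult_mod_eq)
  then show "realify (1\<^sub>m d) $$ (i, j) = 1\<^sub>m (2 * d) $$ (i, j)"
    using i j complex_block_one_zero[of "i mod 2" "j mod 2" "i div 2" "j div 2"]
    by (simp add: index_realify)
qed simp_all

lemma realify_mult:
  assumes A: "A \<in> carrier_mat n m" and B: "B \<in> carrier_mat m k"
  shows "realify (A * B) = realify A * realify B"
proof (rule eq_matI)
  fix i j assume "i < dim_row (realify A * realify B)" "j < dim_col (realify A * realify B)"
  then have i: "i < 2*n" and j: "j < 2*k" using A B by auto
  define a where "a p = A $$ (i div 2, p)" for p
  define b where "b p = B $$ (p, j div 2)" for p
  have "(realify A * realify B) $$ (i, j) = (\<Sum>l<2*m. realify A $$ (i, l) * realify B $$ (l, j))"
    using A B i j by (simp add: scalar_prod_def atLeast0LessThan)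
  also have "\<dots> = (\<Sum>p<m. realify A $$ (i, 2*p) * realify B $$ (2*p, j)
        + realify A $$ (i, 2*p+1) * realify B $$ (2*p+1, j))"
    by (rule sum_lessThan_double)
  also have "\<dots> = (\<Sum>p<m. complex_block (a p) (i mod 2) 0 * complex_block (b p) 0 (j mod 2)
        + complex_block (a p) (i mod 2) 1 * complex_block (b p) 1 (j mod 2))"
    using A B i j by (intro sum.cong refl) (simp add: index_realify a_def b_def)
  also have "\<dots> = (\<Sum>p<m. complex_block (a p * b p) (i mod 2) (j mod 2))"
    by (intro sum.cong refl complex_block_mult) auto
  also have "\<dots> = realify (A * B) $$ (i, j)"
    using A B i j
    by (simp add: index_realify complex_block_sum a_def b_def scalar_prod_def atLeast0LessThan)
  finally show "realify (A * B) $$ (i, j) = (realify A * realify B) $$ (i, j)" by simp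
qed (use A B in auto)

lemma mat_tr_realify:
  assumes A: "A \<in> carrier_mat n n"
  shows "complex_of_real (mat_tr (realify A)) = mat_tr A + cnj (mat_tr A)"
proof -
  have "mat_tr (realify A) = (\<Sum>l<2*n. realify A $$ (l,l))"
    using A by (simp add: mat_tr_def)
  also have "\<dots> = (\<Sum>p<n. realify A $$ (2*p,2*p) + realify A $$ (2*p+1,2*p+1))"
    by (rule sum_lessThan_double)
  also have "\<dots> = (\<Sum>p<n. 2 * Re (A $$ (p,p)))"
    using A by (intro sum.cong refl) (simp add: index_realify complex_block_def)
  finally have "mat_tr (realify A) = 2 * Re (mat_tr A)"
    using A by (simp add: mat_tr_def Re_sum sum_distrib_left)
  then show ?thesis
    by (simp add: complex_add_cnj)
qed

context group
begin

lemma inv_mult_cancel_left [simp]: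
  "x \<in> carrier G \<Longrightarrow> y \<in> carrier G \<Longrightarrow> inv x \<otimes> (x \<otimes> y) = y"
  by (simp add: m_assoc[symmetric])

lemma mult_inv_cancel_left [simp]:
  "x \<in> carrier G \<Longrightarrow> y \<in> carrier G \<Longrightarrow> x \<otimes> (inv x \<otimes> y) = y"
  by (simp add: m_assoc[symmetric])

lemma rep_carrier: "is_rep G d \<rho> \<Longrightarrow> x \<in> carrier G \<Longrightarrow> \<rho> x \<in> carrier_mat d d"
  unfolding is_rep_def by blast

lemma rep_mult:
  "is_rep G d \<rho> \<Longrightarrow> x \<in> carrier G \<Longrightarrow> y \<in> carrier G \<Longrightarrow> \<rho> (x \<otimes> y) = \<rho> x * \<rho> y"
  unfolding is_rep_def by blast

lemma rep_one: "is_rep G d \<rho> \<Longrightarrow> \<rho> \<one> = 1\<^sub>m d"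
  unfolding is_rep_def by blast

lemma rep_pow:
  assumes "is_rep G d \<rho>" and "x \<in> carrier G"
  shows "\<rho> (x [^] (k::nat)) = \<rho> x ^\<^sub>m k"
proof (induct k)
  case 0
  have "dim_row (\<rho> x) = d"
    using rep_carrier[OF assms] by simp
  then show ?case
    by (simp add: rep_one[OF assms(1)])
next
  case (Suc k)
  then show ?case
    using assms by (simp add: rep_mult[OF assms(1)])
qed

lemma mat_tr_rep_conj:
  assumes r: "is_rep G d \<rho>" and x: "x \<in> carrier G" and g: "g \<in> carrier G"
  shows "mat_tr (\<rho> (g \<otimes> x \<otimes> inv g)) = mat_tr (\<rho> x)"
proof -
  have c: "\<rho> x \<in> carrier_mat d d" "\<rho> g \<in> carrier_mat d d" "\<rho> (inv g) \<in> carrier_mat d d"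
    using rep_carrier[OF r] x g by auto
  have "mat_tr (\<rho> (g \<otimes> x \<otimes> inv g)) = mat_tr (\<rho> g * (\<rho> x * \<rho> (inv g)))"
    using x g by (simp add: rep_mult[OF r] assoc_mult_mat[OF c(2,1,3)])
  also have "\<dots> = mat_tr (\<rho> x * \<rho> (inv g) * \<rho> g)"
    using c by (simp add: mat_tr_mult_comm[of "\<rho> g" d d])
  also have "\<dots> = mat_tr (\<rho> x)"
  proof -
    have "\<rho> (inv g) * \<rho> g = 1\<^sub>m d"
      using g by (simp add: rep_mult[OF r, symmetric] rep_one[OF r])
    then show ?thesis
      by (simp add: assoc_mult_mat[OF c(1,3,2)] right_mult_one_mat[OF c(1)])
  qed
  finally show ?thesis .
qed

lemma inv_eq_pow_ord_pred:
  assumes "finite (carrier G)" and x: "x \<in> carrier G"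
  shows "inv x = x [^] (ord x - 1)"
proof (rule inv_equality)
  have "Suc (ord x - 1) = ord x"
    using ord_ge_1[OF assms] by simp
  then show "x [^] (ord x - 1) \<otimes> x = \<one>"
    using x by (metis nat_pow_Suc pow_ord_eq_1)
qed (use x in auto)

lemma mat_tr_real_rep_inv:
  assumes fin: "finite (carrier G)" and r: "is_rep G d (\<rho> :: 'a \<Rightarrow> real mat)"
    and x: "x \<in> carrier G"
  shows "mat_tr (\<rho> (inv x)) = mat_tr (\<rho> x)"
proof -
  have "\<rho> x ^\<^sub>m ord x = 1\<^sub>m d"
    using x by (simp add: rep_pow[OF r, symmetric] rep_one[OF r])
  then show ?thesis
    using mat_tr_pow_pred_finite_order_real[OF rep_carrier[OF r x]] ord_ge_1[OF fin x]
    by (simp add: inv_eq_pow_ord_pred[OF fin x] rep_pow[OF r x])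
qed

lemma realify_rep:
  assumes r: "is_rep G d \<rho>"
  shows "is_rep G (2*d) (\<lambda>x. realify (\<rho> x))"
  unfolding is_rep_def
proof (intro conjI ballI)
  fix x y assume x: "x \<in> carrier G" and y: "y \<in> carrier G"
  show "realify (\<rho> x) \<in> carrier_mat (2 * d) (2 * d)"
    using rep_carrier[OF r x] by simp
  show "realify (\<rho> (x \<otimes> y)) = realify (\<rho> x) * realify (\<rho> y)"
    using realify_mult[OF rep_carrier[OF r x] rep_carrier[OF r y]] rep_mult[OF r x y] by simp
qed (simp add: rep_one[OF r] realify_one)

definition right_transversal :: "'a set \<Rightarrow> (nat \<Rightarrow> 'a) \<Rightarrow> nat \<Rightarrow> bool" where
  "right_transversal H e d \<longleftrightarrow>
     (\<forall>i<d. e i \<in> carrier G) \<and> (\<forall>x\<in>carrier G. \<exists>!i. i < d \<and> x \<otimes> inv (e i) \<in> H)"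

lemma right_transversal_exists:
  assumes fin: "finite (carrier G)" and H: "subgroup H G"
  obtains e d where "right_transversal H e d"
proof -
  define d where "d = card (rcosets H)"
  have "finite (rcosets H)"
    using fin unfolding RCOSETS_def by simp
  then obtain c where "bij_betw c {0..<d} (rcosets H)"
    unfolding d_def using ex_bij_betw_nat_finite by blast
  then have c: "bij_betw c {..<d} (rcosets H)"
    by (simp add: atLeast0LessThan)
  define e where "e i = (SOME x. x \<in> c i)" for i
  have e: "e i \<in> carrier G \<and> c i = H #> e i" if "i < d" for i
  proof -
    have "c i \<in> rcosets H"
      using c that unfolding bij_betw_def by auto
    then obtain a where a: "a \<in> carrier G" "c i = H #> a"
      unfolding RCOSETS_def by auto
    have "e i \<in> H #> a"
      unfolding e_def a(2) by (rule someI[of "\<lambda>x. x \<in> H #> a", OF rcos_self[OF a(1) H]])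
    then show ?thesis
      using a repr_independence[OF _ a(1) H] subgroup.elemrcos_carrier[OF H is_group a(1)] by simp
  qed
  have "\<exists>!i. i < d \<and> x \<otimes> inv (e i) \<in> H" if x: "x \<in> carrier G" for x
  proof -
    have in_coset: "x \<otimes> inv (e i) \<in> H \<longleftrightarrow> c i = H #> x" if "i < d" for i
    proof -
      have ei: "e i \<in> carrier G" "c i = H #> e i"
        using e[OF that] by auto
      have "x \<otimes> inv (e i) \<in> H \<longleftrightarrow> x \<in> H #> e i"
        using subgroup.rcos_module[OF H is_group ei(1) x] by simp
      also have "\<dots> \<longleftrightarrow> H #> e i = H #> x"
        using repr_independence[OF _ ei(1) H] rcos_self[OF x H] by blast
      finally show ?thesis
        using ei(2) by simp
    qed
    have "H #> x \<in> rcosets H"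
      using x H by (simp add: rcosetsI subgroup.subset)
    then obtain i where i: "i < d" "c i = H #> x"
      using c by (metis bij_betw_def imageE lessThan_iff)
    show ?thesis
    proof (rule ex1I[of _ i])
      show "i < d \<and> x \<otimes> inv (e i) \<in> H"
        using i in_coset by simp
      fix j assume "j < d \<and> x \<otimes> inv (e j) \<in> H"
      then show "j = i"
        using in_coset i inj_onD[OF bij_betw_imp_inj_on[OF c], of j i] by auto
    qed
  qed
  with e have "right_transversal H e d"
    unfolding right_transversal_def by simp
  then show ?thesis
    by (rule that)
qed

text \<open>The representation induced from a linear character \<open>\<psi>\<close> of \<open>H\<close>, written in the basis
  of right cosets \<open>H e\<^sub>i\<close>.\<close>

definition monomial_rep :: "'a set \<Rightarrow> ('a \<Rightarrow> complex) \<Rightarrow> (nat \<Rightarrow> 'a) \<Rightarrow> nat \<Rightarrow> 'a \<Rightarrow> complex mat"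
  where "monomial_rep H \<psi> e d x = mat d d (\<lambda>(i,j).
     if e i \<otimes> x \<otimes> inv (e j) \<in> H then \<psi> (e i \<otimes> x \<otimes> inv (e j)) else 0)"

lemma dim_row_monomial_rep [simp]: "dim_row (monomial_rep H \<psi> e d x) = d"
  by (simp add: monomial_rep_def)

lemma dim_col_monomial_rep [simp]: "dim_col (monomial_rep H \<psi> e d x) = d"
  by (simp add: monomial_rep_def)

lemma monomial_rep_carrier_mat [simp]: "monomial_rep H \<psi> e d x \<in> carrier_mat d d"
  by (rule carrier_matI) simp_all

lemma index_monomial_rep:
  "i < d \<Longrightarrow> j < d \<Longrightarrow> monomial_rep H \<psi> e d x $$ (i,j) =
     (if e i \<otimes> x \<otimes> inv (e j) \<in> H then \<psi> (e i \<otimes> x \<otimes> inv (e j)) else 0)"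
  by (simp add: monomial_rep_def)

lemma mat_tr_monomial_rep:
  "mat_tr (monomial_rep H \<psi> e d x) =
     (\<Sum>i<d. if e i \<otimes> x \<otimes> inv (e i) \<in> H then \<psi> (e i \<otimes> x \<otimes> inv (e i)) else 0)"
  by (simp add: mat_tr_def monomial_rep_def)

lemma subgroup_mult_mem_iff:
  assumes H: "subgroup H G" and a: "a \<in> H" and b: "b \<in> carrier G"
  shows "a \<otimes> b \<in> H \<longleftrightarrow> b \<in> H"
proof
  assume "b \<in> H"
  then show "a \<otimes> b \<in> H"
    by (rule subgroup.m_closed[OF H a])
next
  assume "a \<otimes> b \<in> H"
  then have "inv a \<otimes> (a \<otimes> b) \<in> H"
    by (rule subgroup.m_closed[OF H subgroup.m_inv_closed[OF H a]])
  then show "b \<in> H"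
    using subgroup.mem_carrier[OF H a] b by (simp add: m_assoc[symmetric])
qed

lemma monomial_rep_is_rep:
  assumes H: "subgroup H G" and e: "right_transversal H e d"
    and one: "\<psi> \<one> = 1" and mult: "\<And>a b. a \<in> H \<Longrightarrow> b \<in> H \<Longrightarrow> \<psi> (a \<otimes> b) = \<psi> a * \<psi> b"
  shows "is_rep G d (monomial_rep H \<psi> e d)"
proof -
  let ?\<rho> = "monomial_rep H \<psi> e d"
  have e_carrier: "e i \<in> carrier G" if "i < d" for i
    using e that unfolding right_transversal_def by blast
  have e_unique: "\<exists>!j. j < d \<and> x \<otimes> inv (e j) \<in> H" if "x \<in> carrier G" for x
    using e that unfolding right_transversal_def by blast
  have "?\<rho> \<one> = 1\<^sub>m d"
  proof (rule eq_matI)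
    fix i j assume "i < dim_row (1\<^sub>m d)" "j < dim_col (1\<^sub>m d)"
    then have i: "i < d" and j: "j < d" by auto
    have "e i \<otimes> inv (e i) \<in> H"
      using i e_carrier subgroup.one_closed[OF H] by simp
    then have "e i \<otimes> inv (e j) \<in> H \<longleftrightarrow> j = i"
      using e_unique[OF e_carrier[OF i]] i j by blast
    then show "?\<rho> \<one> $$ (i, j) = 1\<^sub>m d $$ (i, j)"
      using i j e_carrier by (auto simp: index_monomial_rep one)
  qed auto
  moreover have "?\<rho> (x \<otimes> y) = ?\<rho> x * ?\<rho> y"
    if x: "x \<in> carrier G" and y: "y \<in> carrier G" for x y
  proof (rule eq_matI)
    fix i l assume "i < dim_row (?\<rho> x * ?\<rho> y)" "l < dim_col (?\<rho> x * ?\<rho> y)"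
    then have i: "i < d" and l: "l < d" by auto
    obtain j where j: "j < d" "e i \<otimes> x \<otimes> inv (e j) \<in> H"
      and j_unique: "\<And>k. k < d \<Longrightarrow> e i \<otimes> x \<otimes> inv (e k) \<in> H \<Longrightarrow> k = j"
      using e_unique[of "e i \<otimes> x"] e_carrier[OF i] x by auto
    define a where "a = e i \<otimes> x \<otimes> inv (e j)"
    define b where "b = e j \<otimes> y \<otimes> inv (e l)"
    have a: "a \<in> H" and b: "b \<in> carrier G"
      using j y e_carrier l by (auto simp: a_def b_def)
    have "inv (e j) \<otimes> (e j \<otimes> (y \<otimes> inv (e l))) = y \<otimes> inv (e l)"
      using y e_carrier j l by (simp add: m_assoc[symmetric])
    then have ab: "a \<otimes> b = e i \<otimes> (x \<otimes> y) \<otimes> inv (e l)"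
      using x y e_carrier i j l by (simp add: a_def b_def m_assoc)
    have "(?\<rho> x * ?\<rho> y) $$ (i, l) = (\<Sum>k\<in>{0..<d}. ?\<rho> x $$ (i,k) * ?\<rho> y $$ (k,l))"
      using i l by (simp add: scalar_prod_def)
    also have "\<dots> = (\<Sum>k\<in>{j}. ?\<rho> x $$ (i,k) * ?\<rho> y $$ (k,l))"
    proof (rule sum.mono_neutral_right)
      show "\<forall>k\<in>{0..<d} - {j}. ?\<rho> x $$ (i,k) * ?\<rho> y $$ (k,l) = 0"
      proof
        fix k assume k: "k \<in> {0..<d} - {j}"
        then have "e i \<otimes> x \<otimes> inv (e k) \<notin> H"
          using j_unique by auto
        then show "?\<rho> x $$ (i,k) * ?\<rho> y $$ (k,l) = 0"
          using i k by (simp add: index_monomial_rep)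
      qed
    qed (use j in auto)
    also have "\<dots> = (if b \<in> H then \<psi> a * \<psi> b else 0)"
      using i j l by (simp add: index_monomial_rep a_def[symmetric] b_def[symmetric])
    also have "\<dots> = ?\<rho> (x \<otimes> y) $$ (i, l)"
      using i l
      by (simp add: index_monomial_rep ab[symmetric] subgroup_mult_mem_iff[OF H a b] mult[OF a])
    finally show "?\<rho> (x \<otimes> y) $$ (i, l) = (?\<rho> x * ?\<rho> y) $$ (i, l)"
      by simp
  qed auto
  ultimately show ?thesis
    unfolding is_rep_def by simp
qed

lemma cnj_mat_tr_monomial_rep:
  assumes H: "subgroup H G" and x: "x \<in> carrier G" and e: "\<And>i. i < d \<Longrightarrow> e i \<in> carrier G"
    and cnj_\<psi>: "\<And>h. h \<in> H \<Longrightarrow> cnj (\<psi> h) = \<psi> (inv h)"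
  shows "cnj (mat_tr (monomial_rep H \<psi> e d x)) = mat_tr (monomial_rep H \<psi> e d (inv x))"
proof -
  have "e i \<otimes> inv x \<otimes> inv (e i) = inv (e i \<otimes> x \<otimes> inv (e i))" if "i < d" for i
    using x e[OF that] by (simp add: inv_mult_group m_assoc)
  moreover have "inv h \<in> H \<longleftrightarrow> h \<in> H" if "h \<in> carrier G" for h
    using H that subgroup.m_inv_closed[OF H, of "inv h"] subgroup.m_inv_closed[OF H, of h] by auto
  ultimately show ?thesis
    using x e unfolding mat_tr_monomial_rep cnj_sum by (intro sum.cong) (auto simp: cnj_\<psi>)
qed

text \<open>The \<open>k\<close>-th linear character of the cyclic group generated by \<open>n\<close>. \<open>SOME\<close> picks an
  exponent \<open>j\<close> with \<open>h = n [^] j\<close>; by \<open>unit_root_pow_eq_if_pow_eq\<close> the value does not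
  depend on that choice.\<close>

definition cyclic_char :: "'a \<Rightarrow> nat \<Rightarrow> 'a \<Rightarrow> complex" where
  "cyclic_char n k h = unit_root (ord n) ^ (k * (SOME j. h = n [^] j))"

context
  fixes n assumes fin: "finite (carrier G)" and n: "n \<in> carrier G"
begin

lemma generate_singleton_eq_pow: "generate G {n} = {n [^] j | j. j \<in> (UNIV :: nat set)}"
  using generate_pow_nat[OF n] ord_ge_1[OF fin n] by simp

lemma unit_root_pow_eq_if_pow_eq:
  assumes "n [^] a = n [^] (b::nat)"
  shows "unit_root (ord n) ^ a = unit_root (ord n) ^ b"
proof -
  have le: "unit_root (ord n) ^ a = unit_root (ord n) ^ b"
    if "b \<le> a" and "n [^] a = n [^] (b::nat)" for a b
  proof -
    have "ord n dvd a - b"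
      using pow_eq_div2[OF n that(2)] pow_eq_id[OF n] by simp
    then have "unit_root (ord n) ^ (a - b) = 1"
      using unit_root_pow_eq_1_iff ord_ge_1[OF fin n] by simp
    then show ?thesis
      using that(1) by (metis le_add_diff_inverse mult_1_right power_add)
  qed
  show ?thesis
    using le[of a b] le[of b a] assms by (cases "b \<le> a") auto
qed

lemma cyclic_char_pow: "cyclic_char n k (n [^] (j::nat)) = unit_root (ord n) ^ (k * j)"
proof -
  define j' where "j' = (SOME j'. n [^] j = n [^] (j'::nat))"
  have "n [^] j = n [^] j'"
    unfolding j'_def by (rule someI) (rule refl)
  then have "unit_root (ord n) ^ j' = unit_root (ord n) ^ j"
    using unit_root_pow_eq_if_pow_eq by metis
  then show ?thesis
    unfolding cyclic_char_def j'_def[symmetric] by (metis power_mult mult.commute)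
qed

lemma cyclic_char_one: "cyclic_char n k \<one> = 1"
  using cyclic_char_pow[of k 0] by simp

lemma cyclic_char_mult:
  assumes "a \<in> generate G {n}" and "b \<in> generate G {n}"
  shows "cyclic_char n k (a \<otimes> b) = cyclic_char n k a * cyclic_char n k b"
  using assms n
  by (auto simp: generate_singleton_eq_pow nat_pow_mult cyclic_char_pow power_add distrib_left)

lemma cnj_cyclic_char:
  assumes h: "h \<in> generate G {n}"
  shows "cnj (cyclic_char n k h) = cyclic_char n k (inv h)"
proof -
  have sub: "subgroup (generate G {n}) G"
    using n by (simp add: generate_is_subgroup)
  have hG: "h \<in> carrier G"
    using subgroup.mem_carrier[OF sub h] .
  have "cyclic_char n k h * cyclic_char n k (inv h) = 1"
    using cyclic_char_mult[OF h subgroup.m_inv_closed[OF sub h], of k, symmetric] hG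
    by (simp add: cyclic_char_one)
  moreover have "norm (cyclic_char n k h) = 1"
    using h by (auto simp: generate_singleton_eq_pow cyclic_char_pow)
  ultimately show ?thesis
    using inverse_unique inverse_eq_cnj_if_norm_1 by metis
qed

lemma sum_cyclic_char:
  assumes h: "h \<in> generate G {n}"
  shows "(\<Sum>k<(ord n). cnj (unit_root (ord n) ^ k) * cyclic_char n k h)
         = (if h = n then of_nat (ord n) else 0)"
proof -
  let ?\<zeta> = "unit_root (ord n)"
  have ord: "0 < ord n"
    using ord_ge_1[OF fin n] by simp
  obtain j where hj: "h = n [^] (j::nat)"
    using h by (auto simp: generate_singleton_eq_pow)
  have cnj_\<zeta>: "cnj ?\<zeta> = ?\<zeta> ^ (ord n - 1)"
    using root_of_unity_pow_pred[OF _ ord] unit_root_pow_eq_1_iff[OF ord] by simp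
  have "cnj (?\<zeta> ^ k) * cyclic_char n k h = (?\<zeta> ^ (ord n - 1 + j)) ^ k" for k
  proof -
    have "cnj (?\<zeta> ^ k) * cyclic_char n k h = (?\<zeta> ^ (ord n - 1)) ^ k * (?\<zeta> ^ j) ^ k"
      by (simp add: hj cyclic_char_pow cnj_\<zeta> mult.commute flip: power_mult)
    then show ?thesis
      by (simp add: power_add power_mult_distrib)
  qed
  then have "(\<Sum>k<(ord n). cnj (?\<zeta> ^ k) * cyclic_char n k h) = (\<Sum>k<(ord n). (?\<zeta> ^ (ord n - 1 + j)) ^ k)"
    by simp
  also have "\<dots> = (if n [^] (ord n - 1 + j) = \<one> then of_nat (ord n) else 0)"
    by (simp only: sum_unit_root_pow[OF ord] pow_eq_id[OF n])
  also have "n [^] (ord n - 1 + j) = inv n \<otimes> h"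
    using n hj by (simp add: nat_pow_mult inv_eq_pow_ord_pred[OF fin n])
  also have "inv n \<otimes> h = \<one> \<longleftrightarrow> h = n"
    using inv_solve_left[of \<one> n h] n hj by auto
  finally show ?thesis .
qed

end

subsection \<open>Characters separate conjugacy classes\<close>

lemma rep_complex_character:
  "is_rep G d \<rho> \<Longrightarrow> (\<lambda>x. if x \<in> carrier G then mat_tr (\<rho> x) else 0) \<in> complex_characters G"
  unfolding complex_characters_def by blast

lemma rep_real_character:
  "is_rep G d \<rho> \<Longrightarrow>
   (\<lambda>x. if x \<in> carrier G then complex_of_real (mat_tr (\<rho> x)) else 0) \<in> real_characters G"
  unfolding real_characters_def by blast

context
  fixes n e d
  assumes fin: "finite (carrier G)" and n: "n \<in> carrier G"
    and e: "right_transversal (generate G {n}) e d"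
begin

lemma cyclic_induced_rep: "is_rep G d (monomial_rep (generate G {n}) (cyclic_char n k) e d)"
  using monomial_rep_is_rep[OF generate_is_subgroup e] cyclic_char_one cyclic_char_mult fin n
  by simp

text \<open>Orthogonality of the linear characters of \<open>\<langle>n\<rangle>\<close>.\<close>

lemma sum_cyclic_induced_char:
  assumes x: "x \<in> carrier G"
  shows "(\<Sum>k<(ord n). cnj (unit_root (ord n) ^ k)
            * mat_tr (monomial_rep (generate G {n}) (cyclic_char n k) e d x))
         = of_nat (ord n * card {i. i < d \<and> e i \<otimes> x \<otimes> inv (e i) = n})"
proof -
  let ?H = "generate G {n}" and ?h = "\<lambda>i. e i \<otimes> x \<otimes> inv (e i)"
  have "n \<in> ?H"
    by (rule generate.incl) simp
  then have per_i: "(\<Sum>k<(ord n). cnj (unit_root (ord n) ^ k) *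
      (if ?h i \<in> ?H then cyclic_char n k (?h i) else 0))
      = (if ?h i = n then of_nat (ord n) else 0)" for i
    using sum_cyclic_char[OF fin n] by (cases "?h i \<in> ?H") auto
  have "(\<Sum>k<(ord n). cnj (unit_root (ord n) ^ k)
            * mat_tr (monomial_rep ?H (cyclic_char n k) e d x))
      = (\<Sum>k<(ord n). \<Sum>i<d. cnj (unit_root (ord n) ^ k) *
          (if ?h i \<in> ?H then cyclic_char n k (?h i) else 0))"
    by (simp only: mat_tr_monomial_rep sum_distrib_left)
  also have "\<dots> = (\<Sum>i<d. \<Sum>k<(ord n). cnj (unit_root (ord n) ^ k) *
          (if ?h i \<in> ?H then cyclic_char n k (?h i) else 0))"
    by (rule sum.swap)
  also have "\<dots> = (\<Sum>i<d. if ?h i = n then of_nat (ord n) else 0)"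
    by (simp only: per_i)
  finally show ?thesis
    by (simp add: sum_if_const_lessThan)
qed

lemma exists_transversal_conj_self: "\<exists>i<d. e i \<otimes> n \<otimes> inv (e i) = n"
proof -
  have sub: "subgroup (generate G {n}) G"
    using n by (simp add: generate_is_subgroup)
  obtain i where i: "i < d" "\<one> \<otimes> inv (e i) \<in> generate G {n}"
    using e unfolding right_transversal_def by blast
  have ei: "e i \<in> carrier G"
    using e i(1) unfolding right_transversal_def by blast
  have "inv (e i) \<in> generate G {n}"
    using i(2) ei by simp
  then have "inv (inv (e i)) \<in> generate G {n}"
    by (rule subgroup.m_inv_closed[OF sub])
  then obtain j where j: "e i = n [^] (j::nat)"
    using ei by (auto simp: generate_singleton_eq_pow[OF fin n])
  have "e i \<otimes> n = n \<otimes> e i"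
    unfolding j by (metis nat_pow_Suc nat_pow_Suc2[OF n])
  then have "e i \<otimes> n \<otimes> inv (e i) = n"
    using ei n by (simp add: m_assoc)
  then show ?thesis
    using i(1) by blast
qed

lemma card_transversal_conj_self_pos: "0 < card {i. i < d \<and> e i \<otimes> n \<otimes> inv (e i) = n}"
  using exists_transversal_conj_self by (auto simp: card_gt_0_iff)

end

lemma conjugate_if_card_transversal_conj_pos:
  assumes e: "\<And>i. i < d \<Longrightarrow> e i \<in> carrier G" and z: "z \<in> carrier G"
    and pos: "0 < card {i. i < d \<and> e i \<otimes> z \<otimes> inv (e i) = n}"
  shows "\<exists>g\<in>carrier G. z = g \<otimes> n \<otimes> inv g"
proof -
  obtain i where i: "i < d" "e i \<otimes> z \<otimes> inv (e i) = n"
    using pos by (auto simp: card_gt_0_iff)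
  then have "z = inv (e i) \<otimes> n \<otimes> inv (inv (e i))"
    using e[OF i(1)] z by (simp add: i(2)[symmetric] m_assoc)
  then show ?thesis
    using e[OF i(1)] by blast
qed

lemma conjugate_if_complex_characters_agree:
  assumes fin: "finite (carrier G)" and x: "x \<in> carrier G" and y: "y \<in> carrier G"
    and agree: "\<forall>\<chi>\<in>complex_characters G. \<chi> x = \<chi> y"
  shows "\<exists>g\<in>carrier G. y = g \<otimes> x \<otimes> inv g"
proof -
  have "subgroup (generate G {x}) G"
    using x by (simp add: generate_is_subgroup)
  then obtain e d where e: "right_transversal (generate G {x}) e d"
    using right_transversal_exists[OF fin] by blast
  let ?N = "\<lambda>z. card {i. i < d \<and> e i \<otimes> z \<otimes> inv (e i) = x}"
  let ?\<chi> = "\<lambda>k z. mat_tr (monomial_rep (generate G {x}) (cyclic_char x k) e d z)"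
  have "?\<chi> k x = ?\<chi> k y" for k
    using bspec[OF agree rep_complex_character[OF cyclic_induced_rep[OF fin x e]]] x y by simp
  then have "(of_nat (ord x * ?N x) :: complex) = of_nat (ord x * ?N y)"
    using sum_cyclic_induced_char[OF fin x e x] sum_cyclic_induced_char[OF fin x e y] by simp
  then have "?N y = ?N x"
    using ord_ge_1[OF fin x] by (simp only: of_nat_eq_iff) simp
  then have "0 < ?N y"
    using card_transversal_conj_self_pos[OF fin x e] by simp
  then show ?thesis
    using conjugate_if_card_transversal_conj_pos[OF _ y] e unfolding right_transversal_def by blast
qed

lemma conjugate_or_inverse_if_real_characters_agree:
  assumes fin: "finite (carrier G)" and x: "x \<in> carrier G" and y: "y \<in> carrier G"
    and agree: "\<forall>\<chi>\<in>real_characters G. \<chi> x = \<chi> y"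
  shows "\<exists>g\<in>carrier G. y = g \<otimes> x \<otimes> inv g \<or> y = g \<otimes> inv x \<otimes> inv g"
proof -
  have sub: "subgroup (generate G {x}) G"
    using x by (simp add: generate_is_subgroup)
  then obtain e d where e: "right_transversal (generate G {x}) e d"
    using right_transversal_exists[OF fin] by blast
  have e_carrier: "\<And>i. i < d \<Longrightarrow> e i \<in> carrier G"
    using e unfolding right_transversal_def by blast
  let ?N = "\<lambda>z. card {i. i < d \<and> e i \<otimes> z \<otimes> inv (e i) = x}"
  let ?\<rho> = "\<lambda>k. monomial_rep (generate G {x}) (cyclic_char x k) e d"
  let ?\<chi> = "\<lambda>k z. mat_tr (?\<rho> k z)"
  have realified: "complex_of_real (mat_tr (realify (?\<rho> k z))) = ?\<chi> k z + ?\<chi> k (inv z)"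
    if "z \<in> carrier G" for k z
  proof -
    have "cnj (?\<chi> k z) = ?\<chi> k (inv z)"
      using cnj_mat_tr_monomial_rep[where \<psi> = "cyclic_char x k" and e = e and d = d, OF sub that e_carrier]
        cnj_cyclic_char[OF fin x] by blast
    then show ?thesis
      by (simp add: mat_tr_realify[OF monomial_rep_carrier_mat])
  qed
  have agree_k: "?\<chi> k x + ?\<chi> k (inv x) = ?\<chi> k y + ?\<chi> k (inv y)" for k
  proof -
    have "complex_of_real (mat_tr (realify (?\<rho> k x))) = complex_of_real (mat_tr (realify (?\<rho> k y)))"
      using bspec[OF agree rep_real_character[OF realify_rep[OF cyclic_induced_rep[OF fin x e]]]] x y
      by simp
    then show ?thesis
      by (simp only: realified[OF x] realified[OF y])
  qed
  have sum_real: "(\<Sum>k<(ord x). cnj (unit_root (ord x) ^ k) * (?\<chi> k z + ?\<chi> k (inv z)))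
      = of_nat (ord x * (?N z + ?N (inv z)))" if "z \<in> carrier G" for z
    using sum_cyclic_induced_char[OF fin x e that] sum_cyclic_induced_char[OF fin x e inv_closed[OF that]]
    by (simp add: distrib_left sum.distrib)
  have "(of_nat (ord x * (?N x + ?N (inv x))) :: complex)
      = (\<Sum>k<(ord x). cnj (unit_root (ord x) ^ k) * (?\<chi> k x + ?\<chi> k (inv x)))"
    by (rule sum_real[OF x, symmetric])
  also have "\<dots> = (\<Sum>k<(ord x). cnj (unit_root (ord x) ^ k) * (?\<chi> k y + ?\<chi> k (inv y)))"
    by (simp only: agree_k)
  also have "\<dots> = of_nat (ord x * (?N y + ?N (inv y)))"
    by (rule sum_real[OF y])
  finally have "(of_nat (ord x * (?N x + ?N (inv x))) :: complex) = of_nat (ord x * (?N y + ?N (inv y)))" .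
  then have "?N y + ?N (inv y) = ?N x + ?N (inv x)"
    using ord_ge_1[OF fin x] by (simp only: of_nat_eq_iff) simp
  then have "0 < ?N y \<or> 0 < ?N (inv y)"
    using card_transversal_conj_self_pos[OF fin x e] by linarith
  then show ?thesis
  proof
    assume "0 < ?N y"
    then show ?thesis
      using conjugate_if_card_transversal_conj_pos[where e = e and d = d, OF e_carrier y] by blast
  next
    assume "0 < ?N (inv y)"
    then obtain g where g: "g \<in> carrier G" "inv y = g \<otimes> x \<otimes> inv g"
      using conjugate_if_card_transversal_conj_pos[where e = e and d = d, OF e_carrier inv_closed[OF y]] by blast
    have "y = inv (inv y)"
      using y by simp
    also have "\<dots> = g \<otimes> inv x \<otimes> inv g"
      using g x by (simp add: inv_mult_group m_assoc)
    finally have "y = g \<otimes> inv x \<otimes> inv g" .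
    then show ?thesis
      using g(1) by blast
  qed
qed

lemma complex_character_conj:
  assumes "\<chi> \<in> complex_characters G" and "x \<in> carrier G" and "g \<in> carrier G"
  shows "\<chi> (g \<otimes> x \<otimes> inv g) = \<chi> x"
  using assms mat_tr_rep_conj unfolding complex_characters_def by auto

lemma real_character_conj:
  assumes "\<chi> \<in> real_characters G" and "x \<in> carrier G" and "g \<in> carrier G"
  shows "\<chi> (g \<otimes> x \<otimes> inv g) = \<chi> x"
  using assms mat_tr_rep_conj unfolding real_characters_def by auto

lemma real_character_inv:
  assumes "finite (carrier G)" and "\<chi> \<in> real_characters G" and "x \<in> carrier G"
  shows "\<chi> (inv x) = \<chi> x"
  using assms mat_tr_real_rep_inv unfolding real_characters_def by auto

lemma zero_complex_character: "(\<lambda>_. 0) \<in> complex_characters G"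
proof -
  have "is_rep G 0 (\<lambda>_. 1\<^sub>m 0 :: complex mat)"
    by (simp add: is_rep_def)
  then have "(\<lambda>x. if x \<in> carrier G then mat_tr (1\<^sub>m 0 :: complex mat) else 0) \<in> complex_characters G"
    by (rule rep_complex_character)
  moreover have "(\<lambda>x. if x \<in> carrier G then mat_tr (1\<^sub>m 0 :: complex mat) else 0) = (\<lambda>_. 0)"
    by (simp add: mat_tr_one_mat cong: if_cong)
  ultimately show ?thesis
    by simp
qed

lemma complex_characters_subset_R: "complex_characters G \<subseteq> R G"
  unfolding R_def using zero_complex_character by force

lemma zero_real_character: "(\<lambda>_. 0) \<in> real_characters G"
proof -
  have "is_rep G 0 (\<lambda>_. 1\<^sub>m 0 :: real mat)"
    by (simp add: is_rep_def)
  then have "(\<lambda>x. if x \<in> carrier G then complex_of_real (mat_tr (1\<^sub>m 0 :: real mat)) else 0) \<in> real_characters G"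
    by (rule rep_real_character)
  moreover have "(\<lambda>x. if x \<in> carrier G then complex_of_real (mat_tr (1\<^sub>m 0 :: real mat)) else 0) = (\<lambda>_. 0)"
    by (simp add: mat_tr_one_mat cong: if_cong)
  ultimately show ?thesis
    by simp
qed

lemma real_characters_subset_RO: "real_characters G \<subseteq> RO G"
  unfolding RO_def using zero_real_character by force

lemma R_vanishes: "f \<in> R G \<Longrightarrow> x \<notin> carrier G \<Longrightarrow> f x = 0"
  unfolding R_def complex_characters_def by auto

lemma RO_vanishes: "f \<in> RO G \<Longrightarrow> x \<notin> carrier G \<Longrightarrow> f x = 0"
  unfolding RO_def real_characters_def by auto

lemma R_conj:
  assumes "f \<in> R G" and x: "x \<in> carrier G" and g: "g \<in> carrier G"
  shows "f (g \<otimes> x \<otimes> inv g) = f x"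
proof -
  obtain \<chi> \<psi> where "f = (\<lambda>x. \<chi> x - \<psi> x)" and "\<chi> \<in> complex_characters G" and "\<psi> \<in> complex_characters G"
    using assms(1) unfolding R_def by blast
  then show ?thesis
    by (simp add: complex_character_conj[OF _ x g])
qed

lemma RO_conj:
  assumes "f \<in> RO G" and x: "x \<in> carrier G" and g: "g \<in> carrier G"
  shows "f (g \<otimes> x \<otimes> inv g) = f x"
proof -
  obtain \<chi> \<psi> where "f = (\<lambda>x. \<chi> x - \<psi> x)" and "\<chi> \<in> real_characters G" and "\<psi> \<in> real_characters G"
    using assms(1) unfolding RO_def by blast
  then show ?thesis
    by (simp add: real_character_conj[OF _ x g])
qed

lemma RO_inv:
  assumes fin: "finite (carrier G)" and "f \<in> RO G" and x: "x \<in> carrier G"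
  shows "f (inv x) = f x"
proof -
  obtain \<chi> \<psi> where "f = (\<lambda>x. \<chi> x - \<psi> x)" and "\<chi> \<in> real_characters G" and "\<psi> \<in> real_characters G"
    using assms(2) unfolding RO_def by blast
  then show ?thesis
    by (simp add: real_character_inv[OF fin _ x])
qed

end

section \<open>Induction from a normal subgroup\<close>

context normal
begin

lemma inv_subgroup [simp]: "x \<in> H \<Longrightarrow> inv\<^bsub>G\<lparr>carrier := H\<rparr>\<^esub> x = inv x"
  using m_inv_consistent[OF subgroup_axioms] by simp

lemma conj_mem_iff: "g \<in> carrier G \<Longrightarrow> z \<in> carrier G \<Longrightarrow> g \<otimes> z \<otimes> inv g \<in> H \<longleftrightarrow> z \<in> H"
proof
  assume g: "g \<in> carrier G" and z: "z \<in> carrier G" and "g \<otimes> z \<otimes> inv g \<in> H"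
  then have "inv g \<otimes> (g \<otimes> z \<otimes> inv g) \<otimes> g \<in> H"
    using inv_op_closed1 by blast
  then show "z \<in> H"
    using g z by (simp add: m_assoc)
qed (use inv_op_closed2 in blast)

definition conj_fun :: "'a \<Rightarrow> ('a \<Rightarrow> complex) \<Rightarrow> 'a \<Rightarrow> complex" where
  "conj_fun g f x = (if x \<in> H then f (g \<otimes> x \<otimes> inv g) else 0)"

lemma is_rep_conj:
  assumes r: "is_rep (G\<lparr>carrier := H\<rparr>) d \<rho>" and g: "g \<in> carrier G"
  shows "is_rep (G\<lparr>carrier := H\<rparr>) d (\<lambda>x. \<rho> (g \<otimes> x \<otimes> inv g))"
proof -
  have "g \<otimes> (x \<otimes> y) \<otimes> inv g = (g \<otimes> x \<otimes> inv g) \<otimes> (g \<otimes> y \<otimes> inv g)"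
    if "x \<in> H" "y \<in> H" for x y
    using g that by (simp add: m_assoc)
  then show ?thesis
    using r inv_op_closed2[OF g] g unfolding is_rep_def by auto
qed

lemma conj_fun_complex_character:
  assumes "\<chi> \<in> complex_characters (G\<lparr>carrier := H\<rparr>)" and g: "g \<in> carrier G"
  shows "conj_fun g \<chi> \<in> complex_characters (G\<lparr>carrier := H\<rparr>)"
proof -
  obtain d \<rho> where r: "is_rep (G\<lparr>carrier := H\<rparr>) d \<rho>"
    and \<chi>: "\<chi> = (\<lambda>x. if x \<in> H then mat_tr (\<rho> x) else 0)"
    using assms(1) unfolding complex_characters_def by auto
  have "conj_fun g \<chi> = (\<lambda>x. if x \<in> H then mat_tr (\<rho> (g \<otimes> x \<otimes> inv g)) else 0)"
    using inv_op_closed2[OF g] by (auto simp: conj_fun_def \<chi>)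
  then show ?thesis
    using is_rep_conj[OF r g] unfolding complex_characters_def by auto
qed

lemma conj_fun_real_character:
  assumes "\<chi> \<in> real_characters (G\<lparr>carrier := H\<rparr>)" and g: "g \<in> carrier G"
  shows "conj_fun g \<chi> \<in> real_characters (G\<lparr>carrier := H\<rparr>)"
proof -
  obtain d \<rho> where r: "is_rep (G\<lparr>carrier := H\<rparr>) d \<rho>"
    and \<chi>: "\<chi> = (\<lambda>x. if x \<in> H then complex_of_real (mat_tr (\<rho> x)) else 0)"
    using assms(1) unfolding real_characters_def by auto
  have "conj_fun g \<chi> = (\<lambda>x. if x \<in> H then complex_of_real (mat_tr (\<rho> (g \<otimes> x \<otimes> inv g))) else 0)"
    using inv_op_closed2[OF g] by (auto simp: conj_fun_def \<chi>)
  then show ?thesis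
    using is_rep_conj[OF r g] unfolding real_characters_def by auto
qed

lemma conj_fun_diff: "conj_fun g (\<lambda>x. \<chi> x - \<psi> x) = (\<lambda>x. conj_fun g \<chi> x - conj_fun g \<psi> x)"
  by (auto simp: conj_fun_def)

lemma conj_fun_R:
  assumes "f \<in> R (G\<lparr>carrier := H\<rparr>)" and g: "g \<in> carrier G"
  shows "conj_fun g f \<in> R (G\<lparr>carrier := H\<rparr>)"
proof -
  obtain \<chi> \<psi> where f: "f = (\<lambda>x. \<chi> x - \<psi> x)"
    and "\<chi> \<in> complex_characters (G\<lparr>carrier := H\<rparr>)" and "\<psi> \<in> complex_characters (G\<lparr>carrier := H\<rparr>)"
    using assms(1) unfolding R_def by blast
  then show ?thesis
    unfolding R_def f conj_fun_diff using conj_fun_complex_character[OF _ g] by blast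
qed

lemma conj_fun_RO:
  assumes "f \<in> RO (G\<lparr>carrier := H\<rparr>)" and g: "g \<in> carrier G"
  shows "conj_fun g f \<in> RO (G\<lparr>carrier := H\<rparr>)"
proof -
  obtain \<chi> \<psi> where f: "f = (\<lambda>x. \<chi> x - \<psi> x)"
    and "\<chi> \<in> real_characters (G\<lparr>carrier := H\<rparr>)" and "\<psi> \<in> real_characters (G\<lparr>carrier := H\<rparr>)"
    using assms(1) unfolding RO_def by blast
  then show ?thesis
    unfolding RO_def f conj_fun_diff using conj_fun_real_character[OF _ g] by blast
qed

lemma Ind_conj_fun:
  assumes g: "g \<in> carrier G"
  shows "Ind G H (conj_fun g f) = Ind G H f"
proof
  fix y
  show "Ind G H (conj_fun g f) y = Ind G H f y"
  proof (cases "y \<in> carrier G")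
    case y: True
    let ?F = "\<lambda>x. if x \<otimes> y \<otimes> inv x \<in> H then f (x \<otimes> y \<otimes> inv x) else 0"
    have "(if x \<otimes> y \<otimes> inv x \<in> H then conj_fun g f (x \<otimes> y \<otimes> inv x) else 0) = ?F (g \<otimes> x)"
      if x: "x \<in> carrier G" for x
    proof -
      have "g \<otimes> x \<otimes> y \<otimes> inv (g \<otimes> x) = g \<otimes> (x \<otimes> y \<otimes> inv x) \<otimes> inv g"
        using g x y by (simp add: m_assoc inv_mult_group)
      then show ?thesis
        using conj_mem_iff[OF g, of "x \<otimes> y \<otimes> inv x"] x y by (simp add: conj_fun_def)
    qed
    then have "(\<Sum>x\<in>carrier G. if x \<otimes> y \<otimes> inv x \<in> H then conj_fun g f (x \<otimes> y \<otimes> inv x) else 0)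
        = (\<Sum>x\<in>carrier G. ?F (g \<otimes> x))"
      by (intro sum.cong) auto
    also have "\<dots> = (\<Sum>x\<in>carrier G. ?F x)"
      by (rule sum.reindex_bij_witness[where i = "\<lambda>z. inv g \<otimes> z" and j = "\<lambda>z. g \<otimes> z"])
        (use g in auto)
    finally show ?thesis
      by (simp add: Ind_def)
  qed (simp add: Ind_def)
qed

lemma Ind_invariant:
  assumes y: "y \<in> H" and invariant: "\<forall>x\<in>carrier G. f (x \<otimes> y \<otimes> inv x) = f y"
  shows "Ind G H f y = of_nat (card (carrier G)) / of_nat (card H) * f y"
proof -
  have "(\<Sum>x\<in>carrier G. if x \<otimes> y \<otimes> inv x \<in> H then f (x \<otimes> y \<otimes> inv x) else 0)
      = (\<Sum>x\<in>carrier G. f y)"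
    using invariant inv_op_closed2[OF _ y] by (intro sum.cong) auto
  then show ?thesis
    using y by (simp add: Ind_def)
qed

lemma inj_on_Ind_iff_invariant:
  assumes fin: "finite (carrier G)"
    and vanish: "\<forall>f\<in>S. \<forall>x. x \<notin> H \<longrightarrow> f x = 0"
    and conj_closed: "\<And>f g. f \<in> S \<Longrightarrow> g \<in> carrier G \<Longrightarrow> conj_fun g f \<in> S"
  shows "inj_on (Ind G H) S \<longleftrightarrow> (\<forall>f\<in>S. \<forall>g\<in>carrier G. \<forall>y\<in>H. f (g \<otimes> y \<otimes> inv g) = f y)"
proof
  assume inj: "inj_on (Ind G H) S"
  show "\<forall>f\<in>S. \<forall>g\<in>carrier G. \<forall>y\<in>H. f (g \<otimes> y \<otimes> inv g) = f y"
  proof (intro ballI)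
    fix f g y assume f: "f \<in> S" and g: "g \<in> carrier G" and y: "y \<in> H"
    have "conj_fun g f = f"
      using inj_onD[OF inj Ind_conj_fun[OF g] conj_closed[OF f g] f] .
    then have "conj_fun g f y = f y"
      by simp
    then show "f (g \<otimes> y \<otimes> inv g) = f y"
      using y by (simp add: conj_fun_def)
  qed
next
  assume invariant: "\<forall>f\<in>S. \<forall>g\<in>carrier G. \<forall>y\<in>H. f (g \<otimes> y \<otimes> inv g) = f y"
  have "0 < card H"
    using finite_subset[OF subset fin] subgroup.one_closed[OF subgroup_axioms] card_gt_0_iff by blast
  moreover have "0 < card (carrier G)"
    using fin one_closed card_gt_0_iff by blast
  ultimately have scale: "of_nat (card (carrier G)) / of_nat (card H) \<noteq> (0::complex)"
    by simp
  show "inj_on (Ind G H) S"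
  proof (rule inj_onI)
    fix f1 f2 assume f1: "f1 \<in> S" and f2: "f2 \<in> S" and eq: "Ind G H f1 = Ind G H f2"
    show "f1 = f2"
    proof
      fix y
      show "f1 y = f2 y"
      proof (cases "y \<in> H")
        case True
        have "Ind G H f1 y = of_nat (card (carrier G)) / of_nat (card H) * f1 y"
          using Ind_invariant[OF True] invariant f1 True by blast
        moreover have "Ind G H f2 y = of_nat (card (carrier G)) / of_nat (card H) * f2 y"
          using Ind_invariant[OF True] invariant f2 True by blast
        ultimately show ?thesis
          using eq scale by simp
      qed (use bspec[OF vanish f1] bspec[OF vanish f2] in simp)
    qed
  qed
qed

lemma subgroup_group: "group (G\<lparr>carrier := H\<rparr>)"
  by (rule subgroup_imp_group[OF subgroup_axioms])

lemma R_invariant_iff_conj_class_eq: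
  assumes fin: "finite (carrier G)"
  shows "(\<forall>f\<in>R (G\<lparr>carrier := H\<rparr>). \<forall>g\<in>carrier G. \<forall>y\<in>H. f (g \<otimes> y \<otimes> inv g) = f y)
     \<longleftrightarrow> (\<forall>n\<in>H. conj_class G (carrier G) n = conj_class G H n)"
proof
  let ?K = "G\<lparr>carrier := H\<rparr>"
  have finK: "finite (carrier ?K)"
    using finite_subset[OF subset fin] by simp
  assume invariant: "\<forall>f\<in>R ?K. \<forall>g\<in>carrier G. \<forall>y\<in>H. f (g \<otimes> y \<otimes> inv g) = f y"
  show "\<forall>n\<in>H. conj_class G (carrier G) n = conj_class G H n"
  proof
    fix n assume n: "n \<in> H"
    have "z \<in> conj_class G H n" if z_in: "z \<in> conj_class G (carrier G) n" for z
    proof -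
      obtain g where g: "g \<in> carrier G" and z: "z = g \<otimes> n \<otimes> inv g"
        using z_in unfolding conj_class_def by blast
      have agree: "\<forall>\<chi>\<in>complex_characters ?K. \<chi> n = \<chi> z"
      proof
        fix \<chi> assume \<chi>: "\<chi> \<in> complex_characters ?K"
        show "\<chi> n = \<chi> z"
          using bspec[OF invariant subsetD[OF group.complex_characters_subset_R[OF subgroup_group] \<chi>]] g n
          unfolding z by simp
      qed
      have "n \<in> carrier ?K" and "z \<in> carrier ?K"
        using n inv_op_closed2[OF g n] unfolding z by simp_all
      from group.conjugate_if_complex_characters_agree[OF subgroup_group finK this agree]
      obtain k where "k \<in> H" "z = k \<otimes> n \<otimes> inv k"
        by auto
      then show ?thesis
        unfolding conj_class_def by blast
    qed
    moreover have "conj_class G H n \<subseteq> conj_class G (carrier G) n"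
      unfolding conj_class_def using subset by blast
    ultimately show "conj_class G (carrier G) n = conj_class G H n"
      by blast
  qed
next
  assume classes: "\<forall>n\<in>H. conj_class G (carrier G) n = conj_class G H n"
  show "\<forall>f\<in>R (G\<lparr>carrier := H\<rparr>). \<forall>g\<in>carrier G. \<forall>y\<in>H. f (g \<otimes> y \<otimes> inv g) = f y"
  proof (intro ballI)
    fix f g y assume f: "f \<in> R (G\<lparr>carrier := H\<rparr>)" and g: "g \<in> carrier G" and y: "y \<in> H"
    have "g \<otimes> y \<otimes> inv g \<in> conj_class G (carrier G) y"
      using g unfolding conj_class_def by blast
    then have "g \<otimes> y \<otimes> inv g \<in> conj_class G H y"
      using bspec[OF classes y] by simp
    then obtain k where k: "k \<in> H" "g \<otimes> y \<otimes> inv g = k \<otimes> y \<otimes> inv k"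
      unfolding conj_class_def by blast
    show "f (g \<otimes> y \<otimes> inv g) = f y"
      using group.R_conj[OF subgroup_group f, of y k] k y by simp
  qed
qed

lemma real_conj_class_inv:
  "n \<in> carrier G \<Longrightarrow> real_conj_class G K (inv n) = real_conj_class G K n"
  unfolding real_conj_class_def by auto

lemma RO_invariant_iff_real_conj_class_eq:
  assumes fin: "finite (carrier G)"
  shows "(\<forall>f\<in>RO (G\<lparr>carrier := H\<rparr>). \<forall>g\<in>carrier G. \<forall>y\<in>H. f (g \<otimes> y \<otimes> inv g) = f y)
     \<longleftrightarrow> (\<forall>n\<in>H. real_conj_class G (carrier G) n = real_conj_class G H n)"
proof
  let ?K = "G\<lparr>carrier := H\<rparr>"
  have finK: "finite (carrier ?K)"
    using finite_subset[OF subset fin] by simp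
  assume invariant: "\<forall>f\<in>RO ?K. \<forall>g\<in>carrier G. \<forall>y\<in>H. f (g \<otimes> y \<otimes> inv g) = f y"
  have conj_mem: "g \<otimes> n \<otimes> inv g \<in> real_conj_class G H n" if n: "n \<in> H" and g: "g \<in> carrier G" for n g
  proof -
    let ?z = "g \<otimes> n \<otimes> inv g"
    have agree: "\<forall>\<chi>\<in>real_characters ?K. \<chi> n = \<chi> ?z"
    proof
      fix \<chi> assume \<chi>: "\<chi> \<in> real_characters ?K"
      show "\<chi> n = \<chi> ?z"
        using bspec[OF invariant subsetD[OF group.real_characters_subset_RO[OF subgroup_group] \<chi>]] g n
        by simp
    qed
    have "n \<in> carrier ?K" and "?z \<in> carrier ?K"
      using n inv_op_closed2[OF g n] by simp_all
    from group.conjugate_or_inverse_if_real_characters_agree[OF subgroup_group finK this agree]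
    obtain k where "k \<in> H" "?z = k \<otimes> n \<otimes> inv k \<or> ?z = k \<otimes> inv n \<otimes> inv k"
      using n by auto
    then show ?thesis
      unfolding real_conj_class_def conj_class_def by blast
  qed
  show "\<forall>n\<in>H. real_conj_class G (carrier G) n = real_conj_class G H n"
  proof
    fix n assume n: "n \<in> H"
    have "real_conj_class G (carrier G) n \<subseteq> real_conj_class G H n"
    proof
      fix z assume "z \<in> real_conj_class G (carrier G) n"
      then obtain g where g: "g \<in> carrier G" and "z = g \<otimes> n \<otimes> inv g \<or> z = g \<otimes> inv n \<otimes> inv g"
        unfolding real_conj_class_def conj_class_def by blast
      then show "z \<in> real_conj_class G H n"
        using conj_mem[OF n g] conj_mem[OF m_inv_closed[OF n] g] real_conj_class_inv[OF mem_carrier[OF n]]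
        by auto
    qed
    moreover have "real_conj_class G H n \<subseteq> real_conj_class G (carrier G) n"
      unfolding real_conj_class_def conj_class_def using subset by blast
    ultimately show "real_conj_class G (carrier G) n = real_conj_class G H n"
      by blast
  qed
next
  assume classes: "\<forall>n\<in>H. real_conj_class G (carrier G) n = real_conj_class G H n"
  show "\<forall>f\<in>RO (G\<lparr>carrier := H\<rparr>). \<forall>g\<in>carrier G. \<forall>y\<in>H. f (g \<otimes> y \<otimes> inv g) = f y"
  proof (intro ballI)
    fix f g y assume f: "f \<in> RO (G\<lparr>carrier := H\<rparr>)" and g: "g \<in> carrier G" and y: "y \<in> H"
    have "g \<otimes> y \<otimes> inv g \<in> real_conj_class G (carrier G) y"
      using g unfolding real_conj_class_def conj_class_def by blast
    then have "g \<otimes> y \<otimes> inv g \<in> real_conj_class G H y"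
      using bspec[OF classes y] by simp
    then obtain k where k: "k \<in> H"
      and "g \<otimes> y \<otimes> inv g = k \<otimes> y \<otimes> inv k \<or> g \<otimes> y \<otimes> inv g = k \<otimes> inv y \<otimes> inv k"
      unfolding real_conj_class_def conj_class_def by blast
    moreover have "f (k \<otimes> y \<otimes> inv k) = f y"
      using group.RO_conj[OF subgroup_group f, of y k] k y by simp
    moreover have "f (k \<otimes> inv y \<otimes> inv k) = f y"
      using group.RO_conj[OF subgroup_group f, of "inv y" k] group.RO_inv[OF subgroup_group _ f, of y]
        finite_subset[OF subset fin] k y by simp
    ultimately show "f (g \<otimes> y \<otimes> inv g) = f y"
      by auto
  qed
qed

lemma inj_on_Ind_R_iff:
  assumes "finite (carrier G)"
  shows "inj_on (Ind G H) (R (G\<lparr>carrier := H\<rparr>))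
     \<longleftrightarrow> (\<forall>n\<in>H. conj_class G (carrier G) n = conj_class G H n)"
proof -
  have "\<forall>f\<in>R (G\<lparr>carrier := H\<rparr>). \<forall>x. x \<notin> H \<longrightarrow> f x = 0"
  proof (intro ballI allI impI)
    fix f x assume f: "f \<in> R (G\<lparr>carrier := H\<rparr>)" and x: "x \<notin> H"
    show "f x = 0"
      using group.R_vanishes[OF subgroup_group f] x by simp
  qed
  from inj_on_Ind_iff_invariant[OF assms this conj_fun_R] show ?thesis
    using R_invariant_iff_conj_class_eq[OF assms] by simp
qed

lemma inj_on_Ind_RO_iff:
  assumes "finite (carrier G)"
  shows "inj_on (Ind G H) (RO (G\<lparr>carrier := H\<rparr>))
     \<longleftrightarrow> (\<forall>n\<in>H. real_conj_class G (carrier G) n = real_conj_class G H n)"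
proof -
  have "\<forall>f\<in>RO (G\<lparr>carrier := H\<rparr>). \<forall>x. x \<notin> H \<longrightarrow> f x = 0"
  proof (intro ballI allI impI)
    fix f x assume f: "f \<in> RO (G\<lparr>carrier := H\<rparr>)" and x: "x \<notin> H"
    show "f x = 0"
      using group.RO_vanishes[OF subgroup_group f] x by simp
  qed
  from inj_on_Ind_iff_invariant[OF assms this conj_fun_RO] show ?thesis
    using RO_invariant_iff_real_conj_class_eq[OF assms] by simp
qed

end

theorem mainTheorem3:
  fixes G :: "('g, 'b) monoid_scheme" and N :: "'g set"
  assumes "group G" and "finite (carrier G)" and "N \<lhd> G"
  shows "(inj_on (Ind G N) (R (G\<lparr>carrier := N\<rparr>))
           \<longleftrightarrow> (\<forall>n\<in>N. conj_class G (carrier G) n = conj_class G N n))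
       \<and> (inj_on (Ind G N) (RO (G\<lparr>carrier := N\<rparr>))
           \<longleftrightarrow> (\<forall>n\<in>N. real_conj_class G (carrier G) n = real_conj_class G N n))"
proof -
  interpret normal N G
    by (rule assms(3))
  show ?thesis
    using inj_on_Ind_R_iff[OF assms(2)] inj_on_Ind_RO_iff[OF assms(2)] by blast
qed

end
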